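(* Consider the planar system $$\frac{dC}{dt} = 1 + m_1\frac{CL}{1+L} - m_2\frac{CL}{1+m_3C} - m_4C,\qquad \frac{dL}{dt} = L - m_5 CL,$$ with positive parameters $m_1,\dots,m_5$, and its equilibria $E_1=(1/m_4,0)$, $E_2=(1/m_5,L_2)$, $E_3=(1/m_5,L_3)$, where $L_2=\frac{-b-\sqrt{\Delta}}{2a}$, $L_3=\frac{-b+\sqrt{\Delta}}{2a}$ with $a=-\frac{m_2}{1+m_3/m_5}$, $b=m_1+m_5-m_4-\frac{m_2}{1+m_3/m_5}$, $c=m_5-m_4$, $\Delta=b^2-4ac$. The equilibria undergo a transcritical bifurcation at $m_4=m_5$: - when $m_2>m_1(1+m_3/m_5)$, $E_1$ and $E_2$ undergo a transcritical bifurcation; - when $m_2<m_1(1+m_3/m_5)$, $E_1$ and $E_3$ undergo a transcritical bifurcation.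
   Context: Nondimensional model of CAR-T cells $C$ and lymphoma cells $L$. $E_1$ is the tumor-free equilibrium; $E_2,E_3$ are the coexistence equilibria, whose $L$-coordinates are the roots of $aL^2+bL+c=0$. *)

theory Defs
  imports "HOL-Analysis.Analysis"
begin

text \<open>Eigenvalues (over the complex numbers) of a linear map of the plane,
  i.e. of the 2x2 matrix with columns D(1,0) and D(0,1).\<close>
definition eigvals2 :: "(real \<times> real \<Rightarrow> real \<times> real) \<Rightarrow> complex set" where
  "eigvals2 D = {z. (complex_of_real (fst (D (1,0))) - z) * (complex_of_real (snd (D (0,1))) - z)
                     - complex_of_real (fst (D (0,1))) * complex_of_real (snd (D (1,0))) = 0}"

definition lin_stable :: "(real \<times> real \<Rightarrow> real \<times> real) \<Rightarrow> real \<times> real \<Rightarrow> bool" where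
  "lin_stable F x \<longleftrightarrow> (\<exists>D. (F has_derivative D) (at x) \<and> (\<forall>z\<in>eigvals2 D. Re z < 0))"

definition lin_unstable :: "(real \<times> real \<Rightarrow> real \<times> real) \<Rightarrow> real \<times> real \<Rightarrow> bool" where
  "lin_unstable F x \<longleftrightarrow> (\<exists>D. (F has_derivative D) (at x) \<and> (\<exists>z\<in>eigvals2 D. Re z > 0))"

definition transcritical ::
  "(real \<Rightarrow> real \<times> real \<Rightarrow> real \<times> real) \<Rightarrow> real \<Rightarrow> (real \<Rightarrow> real \<times> real) \<Rightarrow> (real \<Rightarrow> real \<times> real) \<Rightarrow> bool" where
  "transcritical F mu0 x1 x2 \<longleftrightarrow>
     (\<exists>\<delta>>0.
        (\<forall>mu. \<bar>mu - mu0\<bar> < \<delta> \<longrightarrow> F mu (x1 mu) = (0,0) \<and> F mu (x2 mu) = (0,0)) \<and>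
        continuous_on {mu0 - \<delta> <..< mu0 + \<delta>} x1 \<and>
        continuous_on {mu0 - \<delta> <..< mu0 + \<delta>} x2 \<and>
        x1 mu0 = x2 mu0 \<and>
        (\<forall>mu. 0 < \<bar>mu - mu0\<bar> \<and> \<bar>mu - mu0\<bar> < \<delta> \<longrightarrow> x1 mu \<noteq> x2 mu) \<and>
        (((\<forall>mu\<in>{mu0 - \<delta> <..< mu0}. lin_stable (F mu) (x1 mu) \<and> lin_unstable (F mu) (x2 mu)) \<and>
          (\<forall>mu\<in>{mu0 <..< mu0 + \<delta>}. lin_unstable (F mu) (x1 mu) \<and> lin_stable (F mu) (x2 mu)))
         \<or>
         ((\<forall>mu\<in>{mu0 - \<delta> <..< mu0}. lin_unstable (F mu) (x1 mu) \<and> lin_stable (F mu) (x2 mu)) \<and>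
          (\<forall>mu\<in>{mu0 <..< mu0 + \<delta>}. lin_stable (F mu) (x1 mu) \<and> lin_unstable (F mu) (x2 mu)))))"

text \<open>The CAR-T / lymphoma vector field (C, L), with m4 as the bifurcation parameter.\<close>
definition cart_field :: "real \<Rightarrow> real \<Rightarrow> real \<Rightarrow> real \<Rightarrow> real \<Rightarrow> real \<times> real \<Rightarrow> real \<times> real" where
  "cart_field m1 m2 m3 m5 m4 = (\<lambda>(C, L).
     (1 + m1 * C * L / (1 + L) - m2 * C * L / (1 + m3 * C) - m4 * C,
      L - m5 * C * L))"

definition coef_a :: "real \<Rightarrow> real \<Rightarrow> real \<Rightarrow> real \<Rightarrow> real \<Rightarrow> real" where
  "coef_a m1 m2 m3 m5 m4 = - m2 / (1 + m3 / m5)"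

definition coef_b :: "real \<Rightarrow> real \<Rightarrow> real \<Rightarrow> real \<Rightarrow> real \<Rightarrow> real" where
  "coef_b m1 m2 m3 m5 m4 = m1 + m5 - m4 - m2 / (1 + m3 / m5)"

definition coef_c :: "real \<Rightarrow> real \<Rightarrow> real \<Rightarrow> real \<Rightarrow> real \<Rightarrow> real" where
  "coef_c m1 m2 m3 m5 m4 = m5 - m4"

definition discr :: "real \<Rightarrow> real \<Rightarrow> real \<Rightarrow> real \<Rightarrow> real \<Rightarrow> real" where
  "discr m1 m2 m3 m5 m4 = (coef_b m1 m2 m3 m5 m4)^2 - 4 * coef_a m1 m2 m3 m5 m4 * coef_c m1 m2 m3 m5 m4"

definition L2 :: "real \<Rightarrow> real \<Rightarrow> real \<Rightarrow> real \<Rightarrow> real \<Rightarrow> real" where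
  "L2 m1 m2 m3 m5 m4 = (- coef_b m1 m2 m3 m5 m4 - sqrt (discr m1 m2 m3 m5 m4)) / (2 * coef_a m1 m2 m3 m5 m4)"

definition L3 :: "real \<Rightarrow> real \<Rightarrow> real \<Rightarrow> real \<Rightarrow> real \<Rightarrow> real" where
  "L3 m1 m2 m3 m5 m4 = (- coef_b m1 m2 m3 m5 m4 + sqrt (discr m1 m2 m3 m5 m4)) / (2 * coef_a m1 m2 m3 m5 m4)"

definition E1 :: "real \<Rightarrow> real \<times> real" where
  "E1 m4 = (1 / m4, 0)"

definition E2 :: "real \<Rightarrow> real \<Rightarrow> real \<Rightarrow> real \<Rightarrow> real \<Rightarrow> real \<times> real" where
  "E2 m1 m2 m3 m5 m4 = (1 / m5, L2 m1 m2 m3 m5 m4)"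

definition E3 :: "real \<Rightarrow> real \<Rightarrow> real \<Rightarrow> real \<Rightarrow> real \<Rightarrow> real \<times> real" where
  "E3 m1 m2 m3 m5 m4 = (1 / m5, L3 m1 m2 m3 m5 m4)"

end

theory Submission
  imports Defs "HOL-Library.Quadratic_Discriminant"
begin

text \<open>At m4 = m5 the quadratic a L^2 + b L + c has the root L = 0, and the branch carrying this root
  (L2 if m1 < k, L3 if k < m1, where k = m2 / (1 + m3 / m5)) meets E1 = (1 / m4, 0).
  The Jacobian at E1 is triangular with eigenvalues -m4 and 1 - m5 / m4, so E1 is stable below m5
  and a saddle above. At a coexistence point (1 / m5, L) the Jacobian has vanishing (2,2) entry,
  so its trace is the (1,1) entry, which tends to -m5 as L tends to 0. The equilibrium equation
  m5 - m4 = - L (m1 / (1 + L) - k) turns (m5 - m4) times the determinant into -L^2 g(L) with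
  g(0) = (m1 - k)^2 > 0, so near m5 the determinant has the sign of m4 - m5: the coexistence
  branch is a saddle below m5 and stable above, opposite to E1.\<close>

definition linmap2 :: "real \<Rightarrow> real \<Rightarrow> real \<Rightarrow> real \<Rightarrow> real \<times> real \<Rightarrow> real \<times> real" where
  "linmap2 P Q R S = (\<lambda>(h, k). (P * h + Q * k, R * h + S * k))"

lemma eigvals2_linmap2:
  "eigvals2 (linmap2 P Q R S) =
     {z. (complex_of_real P - z) * (complex_of_real S - z) - complex_of_real Q * complex_of_real R = 0}"
  by (simp add: eigvals2_def linmap2_def)

lemma eigvals2_linmap2_Re_neg:
  assumes "P + S < 0" and "P * S - Q * R > 0" and "z \<in> eigvals2 (linmap2 P Q R S)"
  shows "Re z < 0"
proof (rule ccontr)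
  assume "\<not> Re z < 0"
  have char: "(complex_of_real P - z) * (complex_of_real S - z) - complex_of_real Q * complex_of_real R = 0"
    using assms(3) by (simp add: eigvals2_linmap2)
  have "Im z * (P + S - 2 * Re z) = 0"
    using arg_cong[OF char, of Im] by (simp add: algebra_simps)
  with \<open>\<not> Re z < 0\<close> assms(1) have "Im z = 0" by auto
  then have "Re z * Re z - Re z * (P + S) + (P * S - Q * R) = 0"
    using arg_cong[OF char, of Re] by (simp add: algebra_simps)
  moreover have "Re z * (P + S) \<le> 0"
    using \<open>\<not> Re z < 0\<close> assms(1) by (simp add: mult_nonneg_nonpos)
  ultimately show False
    using assms(2) zero_le_square[of "Re z"] by linarith
qed

lemma eigvals2_linmap2_Re_pos:
  assumes "P * S - Q * R < 0"
  shows "\<exists>z\<in>eigvals2 (linmap2 P Q R S). Re z > 0"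
proof -
  define T where "T = P + S"
  define D where "D = T\<^sup>2 - 4 * (P * S - Q * R)"
  define x where "x = (T + sqrt D) / 2"
  have "T\<^sup>2 < D"
    using assms by (simp add: D_def)
  then have "sqrt (T\<^sup>2) < sqrt D"
    by (rule real_sqrt_less_mono)
  then have "x > 0"
    by (simp add: x_def)
  have "0 \<le> D"
    using \<open>T\<^sup>2 < D\<close> zero_le_power2[of T] by linarith
  then have "(P - x) * (S - x) - Q * R = 0"
    by (simp add: x_def T_def D_def field_simps power2_eq_square)
  then have "complex_of_real x \<in> eigvals2 (linmap2 P Q R S)"
    unfolding eigvals2_linmap2 by (simp flip: of_real_diff of_real_mult)
  with \<open>x > 0\<close> show ?thesis
    by force
qed

lemma lin_stable_linmap2:
  assumes "(F has_derivative linmap2 P Q R S) (at x)" and "P + S < 0" and "P * S - Q * R > 0"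
  shows "lin_stable F x"
  using assms eigvals2_linmap2_Re_neg unfolding lin_stable_def by blast

lemma lin_unstable_linmap2:
  assumes "(F has_derivative linmap2 P Q R S) (at x)" and "P * S - Q * R < 0"
  shows "lin_unstable F x"
  using assms eigvals2_linmap2_Re_pos unfolding lin_unstable_def by blast

lemma cart_field_has_derivative:
  assumes "1 + L \<noteq> 0" and "1 + m3 * C \<noteq> 0"
  shows "(cart_field m1 m2 m3 m5 mu has_derivative
           linmap2 (m1 * L / (1 + L) - m2 * L / (1 + m3 * C)\<^sup>2 - mu)
                   (m1 * C / (1 + L)\<^sup>2 - m2 * C / (1 + m3 * C)) (- m5 * L) (1 - m5 * C))
         (at (C, L))"
proof -
  have field: "cart_field m1 m2 m3 m5 mu = (\<lambda>x. (1 + m1 * fst x * snd x / (1 + snd x)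
      - m2 * fst x * snd x / (1 + m3 * fst x) - mu * fst x, snd x - m5 * fst x * snd x))"
    by (auto simp: cart_field_def)
  show ?thesis
    unfolding field
    apply (rule has_derivative_eq_rhs)
     apply (rule derivative_eq_intros | simp add: assms)+
    using assms
    by (simp add: linmap2_def fun_eq_iff divide_simps) (simp add: algebra_simps power2_eq_square)
qed

lemma cart_field_E1_eq_zero: "mu \<noteq> 0 \<Longrightarrow> cart_field m1 m2 m3 m5 mu (E1 mu) = (0, 0)"
  by (simp add: cart_field_def E1_def)

lemma coef_a_eq: "coef_a m1 m2 m3 m5 mu = - (m2 / (1 + m3 / m5))"
  by (simp add: coef_a_def)

lemma coef_b_eq: "coef_b m1 m2 m3 m5 mu = m1 - m2 / (1 + m3 / m5) + (m5 - mu)"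
  by (simp add: coef_b_def)

lemma cart_field_eq_zero_if_root:
  assumes "m5 \<noteq> 0" and "1 + L \<noteq> 0"
    and "coef_a m1 m2 m3 m5 mu * L\<^sup>2 + coef_b m1 m2 m3 m5 mu * L + coef_c m1 m2 m3 m5 mu = 0"
  shows "cart_field m1 m2 m3 m5 mu (1 / m5, L) = (0, 0)"
proof -
  define k where "k = m2 / (1 + m3 / m5)"
  have "fst (cart_field m1 m2 m3 m5 mu (1 / m5, L)) = 1 + m1 * L / (m5 * (1 + L)) - k * L / m5 - mu / m5"
    by (simp add: cart_field_def k_def)
  also have "\<dots> = (coef_a m1 m2 m3 m5 mu * L\<^sup>2 + coef_b m1 m2 m3 m5 mu * L + coef_c m1 m2 m3 m5 mu)
      / (m5 * (1 + L))"
    using assms(1,2) unfolding coef_a_eq coef_b_eq coef_c_def k_def[symmetric]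
    by (simp add: divide_simps) (simp add: algebra_simps power2_eq_square)
  finally show ?thesis
    using assms by (simp add: cart_field_def prod_eq_iff)
qed

lemma cart_field_has_derivative_E1:
  assumes "mu \<noteq> 0" and "1 + m3 / mu \<noteq> 0"
  shows "(cart_field m1 m2 m3 m5 mu has_derivative
           linmap2 (- mu) ((m1 - m2 / (1 + m3 / mu)) / mu) 0 (1 - m5 / mu)) (at (E1 mu))"
proof -
  have "m1 * (1 / mu) / (1 + 0)\<^sup>2 - m2 * (1 / mu) / (1 + m3 * (1 / mu)) = (m1 - m2 / (1 + m3 / mu)) / mu"
    by (simp add: diff_divide_distrib mult.commute)
  with cart_field_has_derivative[of 0 m3 "1 / mu" m1 m2 m5 mu] assms show ?thesis
    by (simp add: E1_def)
qed

lemma lin_stable_E1: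
  assumes "m3 \<ge> 0" and "0 < mu" and "mu < m5"
  shows "lin_stable (cart_field m1 m2 m3 m5 mu) (E1 mu)"
proof (rule lin_stable_linmap2[OF cart_field_has_derivative_E1])
  have "1 < m5 / mu"
    using assms by simp
  then show "- mu + (1 - m5 / mu) < 0"
    using assms by linarith
  show "- mu * (1 - m5 / mu) - (m1 - m2 / (1 + m3 / mu)) / mu * 0 > 0"
    using assms by (simp add: algebra_simps)
  have "0 \<le> m3 / mu"
    using assms by simp
  then show "1 + m3 / mu \<noteq> 0"
    by linarith
qed (use assms in simp)

lemma lin_unstable_E1:
  assumes "m3 \<ge> 0" and "0 < m5" and "m5 < mu"
  shows "lin_unstable (cart_field m1 m2 m3 m5 mu) (E1 mu)"
proof (rule lin_unstable_linmap2[OF cart_field_has_derivative_E1])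
  show "- mu * (1 - m5 / mu) - (m1 - m2 / (1 + m3 / mu)) / mu * 0 < 0"
    using assms by (simp add: algebra_simps)
  have "0 \<le> m3 / mu"
    using assms by simp
  then show "1 + m3 / mu \<noteq> 0"
    by linarith
qed (use assms in simp)

lemma cart_field_has_derivative_coexistence:
  assumes "m5 \<noteq> 0" and "1 + L \<noteq> 0" and "1 + m3 / m5 \<noteq> 0"
  shows "(cart_field m1 m2 m3 m5 mu has_derivative
           linmap2 (m1 * L / (1 + L) - m2 * L / (1 + m3 / m5)\<^sup>2 - mu)
                   ((m1 / (1 + L)\<^sup>2 - m2 / (1 + m3 / m5)) / m5) (- m5 * L) 0)
         (at (1 / m5, L))"
proof -
  have "m1 * (1 / m5) / (1 + L)\<^sup>2 - m2 * (1 / m5) / (1 + m3 * (1 / m5))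
      = (m1 / (1 + L)\<^sup>2 - m2 / (1 + m3 / m5)) / m5"
    by (simp add: diff_divide_distrib mult.commute)
  with cart_field_has_derivative[of L m3 "1 / m5" m1 m2 m5 mu] assms show ?thesis
    by simp
qed

lemma lin_stable_coexistence:
  assumes "m5 \<noteq> 0" and "1 + L \<noteq> 0" and "1 + m3 / m5 \<noteq> 0"
    and "m1 * L / (1 + L) - m2 * L / (1 + m3 / m5)\<^sup>2 - mu < 0"
    and "L * (m1 / (1 + L)\<^sup>2 - m2 / (1 + m3 / m5)) > 0"
  shows "lin_stable (cart_field m1 m2 m3 m5 mu) (1 / m5, L)"
  by (rule lin_stable_linmap2[OF cart_field_has_derivative_coexistence])
    (use assms in \<open>simp_all add: mult.commute\<close>)

lemma lin_unstable_coexistence: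
  assumes "m5 \<noteq> 0" and "1 + L \<noteq> 0" and "1 + m3 / m5 \<noteq> 0"
    and "L * (m1 / (1 + L)\<^sup>2 - m2 / (1 + m3 / m5)) < 0"
  shows "lin_unstable (cart_field m1 m2 m3 m5 mu) (1 / m5, L)"
  by (rule lin_unstable_linmap2[OF cart_field_has_derivative_coexistence])
    (use assms in \<open>simp_all add: mult.commute\<close>)

lemma coexistence_det_sign:
  assumes "1 + L \<noteq> 0" and "mu \<noteq> m5"
    and root: "coef_a m1 m2 m3 m5 mu * L\<^sup>2 + coef_b m1 m2 m3 m5 mu * L + coef_c m1 m2 m3 m5 mu = 0"
    and pos: "(m1 / (1 + L) - m2 / (1 + m3 / m5)) * (m1 / (1 + L)\<^sup>2 - m2 / (1 + m3 / m5)) > 0"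
  shows "(m5 - mu) * (L * (m1 / (1 + L)\<^sup>2 - m2 / (1 + m3 / m5))) < 0"
proof -
  define k where "k = m2 / (1 + m3 / m5)"
  have "(m5 - mu) * (1 + L) = L * (k * (1 + L) - m1)"
    using root unfolding coef_a_eq coef_b_eq coef_c_def k_def[symmetric]
    by (simp add: algebra_simps power2_eq_square)
  then have e: "m5 - mu = - L * (m1 / (1 + L) - k)"
    using assms(1) by (simp add: field_simps)
  then have "L \<noteq> 0"
    using assms(2) by auto
  have "(m5 - mu) * (L * (m1 / (1 + L)\<^sup>2 - k)) = - L\<^sup>2 * ((m1 / (1 + L) - k) * (m1 / (1 + L)\<^sup>2 - k))"
    unfolding e by (simp add: power2_eq_square)
  also have "\<dots> < 0"
    using pos \<open>L \<noteq> 0\<close> by (simp add: k_def)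
  finally show ?thesis
    by (simp add: k_def)
qed

lemma eventually_nhds_less_if_isCont:
  fixes f :: "'a::t2_space \<Rightarrow> real"
  assumes "isCont f a" and "f a < c"
  shows "\<forall>\<^sub>F x in nhds a. f x < c"
  using order_tendstoD(2)[OF assms(1)[unfolded isCont_def tendsto_at_iff_tendsto_nhds] assms(2)] .

lemma eventually_nhds_greater_if_isCont:
  fixes f :: "'a::t2_space \<Rightarrow> real"
  assumes "isCont f a" and "c < f a"
  shows "\<forall>\<^sub>F x in nhds a. c < f x"
  using order_tendstoD(1)[OF assms(1)[unfolded isCont_def tendsto_at_iff_tendsto_nhds] assms(2)] .

lemma stability_coexistence:
  assumes "m3 > 0" and "m5 > 0" and "1 + L \<noteq> 0"
    and trace: "m1 * L / (1 + L) - m2 * L / (1 + m3 / m5)\<^sup>2 - mu < 0"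
    and pos: "(m1 / (1 + L) - m2 / (1 + m3 / m5)) * (m1 / (1 + L)\<^sup>2 - m2 / (1 + m3 / m5)) > 0"
    and root: "coef_a m1 m2 m3 m5 mu * L\<^sup>2 + coef_b m1 m2 m3 m5 mu * L + coef_c m1 m2 m3 m5 mu = 0"
  shows "mu < m5 \<Longrightarrow> lin_unstable (cart_field m1 m2 m3 m5 mu) (1 / m5, L)"
    and "m5 < mu \<Longrightarrow> lin_stable (cart_field m1 m2 m3 m5 mu) (1 / m5, L)"
proof -
  have "0 < m3 / m5"
    using assms(1,2) by simp
  then have "1 + m3 / m5 \<noteq> 0"
    by linarith
  note det_sign = coexistence_det_sign[OF assms(3) _ root pos]
  show "lin_unstable (cart_field m1 m2 m3 m5 mu) (1 / m5, L)" if "mu < m5"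
    using det_sign that assms(2,3) \<open>1 + m3 / m5 \<noteq> 0\<close>
    by (intro lin_unstable_coexistence) (auto simp: mult_less_0_iff)
  show "lin_stable (cart_field m1 m2 m3 m5 mu) (1 / m5, L)" if "m5 < mu"
    using det_sign that assms(2,3) \<open>1 + m3 / m5 \<noteq> 0\<close> trace
    by (intro lin_stable_coexistence) (auto simp: mult_less_0_iff)
qed

lemma eventually_near_bifurcation:
  fixes r :: "real \<Rightarrow> real"
  assumes "m3 > 0" and "m5 > 0" and "m1 \<noteq> m2 / (1 + m3 / m5)" and "isCont r m5" and "r m5 = 0"
  shows "\<forall>\<^sub>F mu in nhds m5. 0 < mu \<and> 0 < 1 + r mu \<and>
           m1 * r mu / (1 + r mu) - m2 * r mu / (1 + m3 / m5)\<^sup>2 - mu < 0 \<and>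
           (m1 / (1 + r mu) - m2 / (1 + m3 / m5)) * (m1 / (1 + r mu)\<^sup>2 - m2 / (1 + m3 / m5)) > 0"
proof -
  define k where "k = m2 / (1 + m3 / m5)"
  have "0 < m3 / m5"
    using assms(1,2) by simp
  then have "1 + m3 / m5 \<noteq> 0"
    by linarith
  have "(m1 / (1 + r m5) - k) * (m1 / (1 + r m5)\<^sup>2 - k) = (m1 - k)\<^sup>2"
    using assms(5) by (simp add: power2_eq_square)
  then have "(m1 / (1 + r m5) - k) * (m1 / (1 + r m5)\<^sup>2 - k) > 0"
    using assms(3) by (simp add: k_def)
  with assms \<open>1 + m3 / m5 \<noteq> 0\<close> show ?thesis
    unfolding k_def
    by (intro eventually_conj eventually_nhds_greater_if_isCont eventually_nhds_less_if_isCont)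
      (auto intro!: continuous_intros)
qed

lemma transcritical_E1_coexistence:
  fixes r :: "real \<Rightarrow> real"
  assumes "m3 > 0" and "m5 > 0" and "m1 \<noteq> m2 / (1 + m3 / m5)"
    and "continuous_on UNIV r" and "r m5 = 0"
    and "\<forall>\<^sub>F mu in nhds m5.
           coef_a m1 m2 m3 m5 mu * (r mu)\<^sup>2 + coef_b m1 m2 m3 m5 mu * r mu + coef_c m1 m2 m3 m5 mu = 0"
  shows "transcritical (cart_field m1 m2 m3 m5) m5 E1 (\<lambda>mu. (1 / m5, r mu))"
proof -
  have "isCont r m5"
    using assms(4) by (simp add: continuous_on_eq_continuous_at)
  with assms have "\<forall>\<^sub>F mu in nhds m5. (0 < mu \<and> 0 < 1 + r mu \<and>
           m1 * r mu / (1 + r mu) - m2 * r mu / (1 + m3 / m5)\<^sup>2 - mu < 0 \<and>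
           (m1 / (1 + r mu) - m2 / (1 + m3 / m5)) * (m1 / (1 + r mu)\<^sup>2 - m2 / (1 + m3 / m5)) > 0) \<and>
         coef_a m1 m2 m3 m5 mu * (r mu)\<^sup>2 + coef_b m1 m2 m3 m5 mu * r mu + coef_c m1 m2 m3 m5 mu = 0"
    (is "\<forall>\<^sub>F mu in nhds m5. ?near mu")
    by (intro eventually_conj eventually_near_bifurcation)
  then obtain \<delta> where "\<delta> > 0" and near: "\<And>mu. \<bar>mu - m5\<bar> < \<delta> \<Longrightarrow> ?near mu"
    unfolding eventually_nhds_metric dist_real_def by blast
  show ?thesis
    unfolding transcritical_def
  proof (intro exI[of _ \<delta>] conjI allI impI ballI disjI1)
    fix mu
    assume "mu \<in> {m5 - \<delta><..<m5}"
    then have "\<bar>mu - m5\<bar> < \<delta>" and "mu < m5"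
      by auto
    with near assms(1) show "lin_stable (cart_field m1 m2 m3 m5 mu) (E1 mu)"
      by (intro lin_stable_E1) auto
    from near[OF \<open>\<bar>mu - m5\<bar> < \<delta>\<close>] assms(1,2) \<open>mu < m5\<close>
    show "lin_unstable (cart_field m1 m2 m3 m5 mu) (1 / m5, r mu)"
      by (intro stability_coexistence(1)) auto
  next
    fix mu
    assume "mu \<in> {m5<..<m5 + \<delta>}"
    then have "\<bar>mu - m5\<bar> < \<delta>" and "m5 < mu"
      by auto
    with assms(1,2) show "lin_unstable (cart_field m1 m2 m3 m5 mu) (E1 mu)"
      by (intro lin_unstable_E1) auto
    from near[OF \<open>\<bar>mu - m5\<bar> < \<delta>\<close>] assms(1,2) \<open>m5 < mu\<close>
    show "lin_stable (cart_field m1 m2 m3 m5 mu) (1 / m5, r mu)"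
      by (intro stability_coexistence(2)) auto
  next
    fix mu
    assume "\<bar>mu - m5\<bar> < \<delta>"
    with near show "cart_field m1 m2 m3 m5 mu (E1 mu) = (0, 0)"
      by (intro cart_field_E1_eq_zero) auto
    from near[OF \<open>\<bar>mu - m5\<bar> < \<delta>\<close>] assms(2)
    show "cart_field m1 m2 m3 m5 mu (1 / m5, r mu) = (0, 0)"
      by (intro cart_field_eq_zero_if_root) auto
  next
    have "mu \<noteq> 0" if "mu \<in> {m5 - \<delta><..<m5 + \<delta>}" for mu
      using near[of mu] that by (auto simp: abs_less_iff)
    then show "continuous_on {m5 - \<delta><..<m5 + \<delta>} E1"
      unfolding E1_def by (intro continuous_intros) auto
    show "continuous_on {m5 - \<delta><..<m5 + \<delta>} (\<lambda>mu. (1 / m5, r mu))"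
      using assms(4) by (intro continuous_intros) (auto intro: continuous_on_subset)
    show "E1 m5 = (1 / m5, r m5)"
      using assms(5) by (simp add: E1_def)
  next
    fix mu
    assume "0 < \<bar>mu - m5\<bar> \<and> \<bar>mu - m5\<bar> < \<delta>"
    with near assms(2) show "E1 mu \<noteq> (1 / m5, r mu)"
      by (auto simp: E1_def)
  qed (fact \<open>\<delta> > 0\<close>)
qed

lemma continuous_on_discr: "continuous_on UNIV (discr m1 m2 m3 m5)"
  unfolding discr_def coef_a_def coef_b_def coef_c_def by (intro continuous_intros)

lemma continuous_on_L2: "m2 / (1 + m3 / m5) \<noteq> 0 \<Longrightarrow> continuous_on UNIV (L2 m1 m2 m3 m5)"
  unfolding L2_def coef_a_eq coef_b_eq by (intro continuous_intros continuous_on_discr) auto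

lemma continuous_on_L3: "m2 / (1 + m3 / m5) \<noteq> 0 \<Longrightarrow> continuous_on UNIV (L3 m1 m2 m3 m5)"
  unfolding L3_def coef_a_eq coef_b_eq by (intro continuous_intros continuous_on_discr) auto

lemma discr_at_bifurcation: "discr m1 m2 m3 m5 m5 = (m1 - m2 / (1 + m3 / m5))\<^sup>2"
  by (simp add: discr_def coef_b_eq coef_c_def)

lemma L2_at_bifurcation:
  assumes "m1 < m2 / (1 + m3 / m5)"
  shows "L2 m1 m2 m3 m5 m5 = 0"
  using assms by (simp add: L2_def discr_at_bifurcation coef_b_eq)

lemma L3_at_bifurcation:
  assumes "m2 / (1 + m3 / m5) < m1"
  shows "L3 m1 m2 m3 m5 m5 = 0"
  using assms by (simp add: L3_def discr_at_bifurcation coef_b_eq)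

lemma quadratic_formula_roots:
  fixes a b c :: real
  assumes "a \<noteq> 0" and "b\<^sup>2 - 4 * a * c \<ge> 0"
  shows "a * ((- b - sqrt (b\<^sup>2 - 4 * a * c)) / (2 * a))\<^sup>2
           + b * ((- b - sqrt (b\<^sup>2 - 4 * a * c)) / (2 * a)) + c = 0"
    and "a * ((- b + sqrt (b\<^sup>2 - 4 * a * c)) / (2 * a))\<^sup>2
           + b * ((- b + sqrt (b\<^sup>2 - 4 * a * c)) / (2 * a)) + c = 0"
  using assms by (intro discriminant_nonneg[THEN iffD2]; simp add: discrim_def)+

lemma L2_L3_roots:
  assumes "coef_a m1 m2 m3 m5 mu \<noteq> 0" and "discr m1 m2 m3 m5 mu \<ge> 0"
  shows "coef_a m1 m2 m3 m5 mu * (L2 m1 m2 m3 m5 mu)\<^sup>2 + coef_b m1 m2 m3 m5 mu * L2 m1 m2 m3 m5 mu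
           + coef_c m1 m2 m3 m5 mu = 0"
    and "coef_a m1 m2 m3 m5 mu * (L3 m1 m2 m3 m5 mu)\<^sup>2 + coef_b m1 m2 m3 m5 mu * L3 m1 m2 m3 m5 mu
           + coef_c m1 m2 m3 m5 mu = 0"
  using assms quadratic_formula_roots unfolding L2_def L3_def discr_def by blast+

lemma eventually_L2_L3_roots:
  assumes "m2 / (1 + m3 / m5) \<noteq> 0" and "m1 \<noteq> m2 / (1 + m3 / m5)"
  shows "\<forall>\<^sub>F mu in nhds m5.
      coef_a m1 m2 m3 m5 mu * (L2 m1 m2 m3 m5 mu)\<^sup>2 + coef_b m1 m2 m3 m5 mu * L2 m1 m2 m3 m5 mu
        + coef_c m1 m2 m3 m5 mu = 0" (is ?L2)
    and "\<forall>\<^sub>F mu in nhds m5.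
      coef_a m1 m2 m3 m5 mu * (L3 m1 m2 m3 m5 mu)\<^sup>2 + coef_b m1 m2 m3 m5 mu * L3 m1 m2 m3 m5 mu
        + coef_c m1 m2 m3 m5 mu = 0" (is ?L3)
proof -
  have "isCont (discr m1 m2 m3 m5) m5"
    using continuous_on_discr by (simp add: continuous_on_eq_continuous_at)
  moreover have "discr m1 m2 m3 m5 m5 > 0"
    using assms(2) by (simp add: discr_at_bifurcation)
  ultimately have "\<forall>\<^sub>F mu in nhds m5. discr m1 m2 m3 m5 mu > 0"
    by (rule eventually_nhds_greater_if_isCont)
  moreover have "coef_a m1 m2 m3 m5 mu \<noteq> 0" for mu
    using assms(1) by (simp add: coef_a_eq)
  ultimately show ?L2 and ?L3
    by (auto elim!: eventually_mono intro: L2_L3_roots)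
qed

theorem theorem5:
  fixes m1 m2 m3 m5 :: real
  assumes "m1 > 0" and "m2 > 0" and "m3 > 0" and "m5 > 0"
  shows "(m2 > m1 * (1 + m3 / m5) \<longrightarrow>
            transcritical (cart_field m1 m2 m3 m5) m5 E1 (E2 m1 m2 m3 m5)) \<and>
         (m2 < m1 * (1 + m3 / m5) \<longrightarrow>
            transcritical (cart_field m1 m2 m3 m5) m5 E1 (E3 m1 m2 m3 m5))"
proof -
  have "1 + m3 / m5 > 0"
    using assms by (simp add: add_pos_pos)
  then have k_pos: "m2 / (1 + m3 / m5) > 0"
    using assms(2) by simp
  show ?thesis
  proof (intro conjI impI)
    assume "m2 > m1 * (1 + m3 / m5)"
    then have "m1 < m2 / (1 + m3 / m5)"
      using \<open>1 + m3 / m5 > 0\<close> by (simp add: pos_less_divide_eq)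
    with assms k_pos show "transcritical (cart_field m1 m2 m3 m5) m5 E1 (E2 m1 m2 m3 m5)"
      unfolding E2_def[abs_def]
      by (intro transcritical_E1_coexistence continuous_on_L2 L2_at_bifurcation
          eventually_L2_L3_roots(1)) auto
  next
    assume "m2 < m1 * (1 + m3 / m5)"
    then have "m2 / (1 + m3 / m5) < m1"
      using \<open>1 + m3 / m5 > 0\<close> by (simp add: pos_divide_less_eq)
    with assms k_pos show "transcritical (cart_field m1 m2 m3 m5) m5 E1 (E3 m1 m2 m3 m5)"
      unfolding E3_def[abs_def]
      by (intro transcritical_E1_coexistence continuous_on_L3 L3_at_bifurcation
          eventually_L2_L3_roots(2)) auto
  qed
qed

end
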